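(* Let $1\leq a_1\leq\cdots\leq a_k$, $k\geq 3$, be an arbitrary partition of a natural number $n$. Then $$S(a_1,\dots,a_k)\prec S(\underbrace{1,\dots,1}_{k},n-k),$$ where the right-hand tree has $k$ branches of length $1$ and one branch of length $n-k$.
   Context: $M_k(G)$ denotes the number of closed walks of length $k$ in a graph $G$. For graphs $G,H$, $G\prec H$ means $M_k(G)\leq M_k(H)$ for all $k\geq 0$ with strict inequality for at least one $k$. For positive integers $c_1,\dots,c_m$, the starlike tree $S(c_1,\dots,c_m)$ is obtained from disjoint paths $P_{c_1+1},\dots,P_{c_m+1}$ ($P_r$ the path on $r$ vertices) by identifying one end vertex of each path into a single vertex (the center); the resulting pendant paths from the center are the branches, of lengths $c_1,\dots,c_m$. *)

theory Defs
  imports Main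
begin

definition closed_walks :: "'a set \<Rightarrow> ('a \<Rightarrow> 'a \<Rightarrow> bool) \<Rightarrow> nat \<Rightarrow> 'a list set" where
  "closed_walks V E k = {w. length w = Suc k \<and> set w \<subseteq> V \<and> hd w = last w \<and>
      (\<forall>i<k. E (w ! i) (w ! Suc i))}"

definition M :: "'a set \<Rightarrow> ('a \<Rightarrow> 'a \<Rightarrow> bool) \<Rightarrow> nat \<Rightarrow> nat" where
  "M V E k = card (closed_walks V E k)"

definition walk_prec :: "'a set \<Rightarrow> ('a \<Rightarrow> 'a \<Rightarrow> bool) \<Rightarrow> 'b set \<Rightarrow> ('b \<Rightarrow> 'b \<Rightarrow> bool) \<Rightarrow> bool" where
  "walk_prec V E W F \<longleftrightarrow> (\<forall>k. M V E k \<le> M W F k) \<and> (\<exists>k. M V E k < M W F k)"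

text \<open>Starlike tree S(c_1,...,c_m), branch lengths given as a list c.
Center vertex (0,0); the j-th vertex (1 \<le> j \<le> c_i) on branch i (i < m) is (i,j).\<close>
definition star_verts :: "nat list \<Rightarrow> (nat \<times> nat) set" where
  "star_verts c = insert (0,0) {(i,j). i < length c \<and> 1 \<le> j \<and> j \<le> c ! i}"

definition star_step :: "nat \<times> nat \<Rightarrow> nat \<times> nat \<Rightarrow> bool" where
  "star_step x y \<longleftrightarrow> (fst x = fst y \<and> snd y = snd x + 1) \<or> (x = (0,0) \<and> snd y = 1)"

definition star_adj :: "nat list \<Rightarrow> nat \<times> nat \<Rightarrow> nat \<times> nat \<Rightarrow> bool" where
  "star_adj c u v \<longleftrightarrow> u \<in> star_verts c \<and> v \<in> star_verts c \<and> (star_step u v \<or> star_step v u)"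

end

theory Submission
  imports Defs
begin

text \<open>Put m = n - k. For L \<ge> 1 we inject the closed walks of length L in S(a) into those
  in the broom S(1,...,1,m), whose long branch we call the handle; for L = 0 both trees have
  n + 1 vertices.

  A walk avoiding the centre stays in one branch, which is copied vertex by vertex onto a
  segment of the handle; segments of different branches meet in at most one endpoint, where a
  walk cannot rest. A walk through the centre is instead recorded step by step: a step into the
  centre becomes the centre, a step out of it becomes the leaf of the branch it enters, and a step
  leaving depth d \<ge> 1 becomes the handle vertex at depth d - 1. This record determines the depth
  of every vertex of the walk and, following the walk from a visit of the centre, its branches.
  Only the images of walks through the centre contain leaves.

  The walk centre, leaf, centre, end of the handle, centre has no preimage as soon as some
  branch has length a_i \<le> m, which is the case when k \<ge> 2 and n > k.\<close>

section \<open>Closed walks\<close>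

lemma closed_walks_iff_nth:
  "w \<in> closed_walks V E L \<longleftrightarrow>
     length w = Suc L \<and> (\<forall>t\<le>L. w!t \<in> V) \<and> w!L = w!0 \<and> (\<forall>t<L. E (w!t) (w!Suc t))"
proof
  assume "w \<in> closed_walks V E L"
  then have l: "length w = Suc L" and s: "set w \<subseteq> V" and h: "hd w = last w"
    and e: "\<forall>t<L. E (w!t) (w!Suc t)" by (auto simp: closed_walks_def)
  have "w \<noteq> []" using l by auto
  then have "w!L = w!0" using h l by (simp add: hd_conv_nth last_conv_nth)
  moreover have "\<forall>t\<le>L. w!t \<in> V" using s l by (auto intro!: subsetD[OF s] nth_mem)
  ultimately show "length w = Suc L \<and> (\<forall>t\<le>L. w!t \<in> V) \<and> w!L = w!0 \<and> (\<forall>t<L. E (w!t) (w!Suc t))"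
    using l e by auto
next
  assume w: "length w = Suc L \<and> (\<forall>t\<le>L. w!t \<in> V) \<and> w!L = w!0 \<and> (\<forall>t<L. E (w!t) (w!Suc t))"
  then have "w \<noteq> []" by auto
  then have "hd w = last w" using w by (simp add: hd_conv_nth last_conv_nth)
  moreover have "set w \<subseteq> V" using w by (auto simp: set_conv_nth)
  ultimately show "w \<in> closed_walks V E L" using w by (simp add: closed_walks_def)
qed

lemma finite_closed_walks: "finite V \<Longrightarrow> finite (closed_walks V E L)"
  by (rule finite_subset[OF _ finite_lists_length_eq[of V "Suc L"]]) (auto simp: closed_walks_def)

lemma closed_walks_0: "closed_walks V E 0 = (\<lambda>v. [v]) ` V"
  by (auto simp: closed_walks_def length_Suc_conv)

lemma M_0: "M V E 0 = card V"
  unfolding M_def closed_walks_0 by (rule card_image) (simp add: inj_on_def)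

lemma M_le_if_inj_on:
  assumes "finite W" and "inj_on f (closed_walks V E L)"
    and "f ` closed_walks V E L \<subseteq> closed_walks W F L"
  shows "M V E L \<le> M W F L"
  unfolding M_def using assms by (intro card_inj_on_le finite_closed_walks)

lemma M_less_if_inj_on:
  assumes "finite W" and "inj_on f (closed_walks V E L)"
    and "f ` closed_walks V E L \<subset> closed_walks W F L"
  shows "M V E L < M W F L"
  unfolding M_def card_image[OF assms(2), symmetric]
  using assms by (intro psubset_card_mono finite_closed_walks)

lemma closed_walks_map:
  assumes "w \<in> closed_walks V E L" and "h ` V \<subseteq> W"
    and "\<And>x y. x \<in> V \<Longrightarrow> y \<in> V \<Longrightarrow> E x y \<Longrightarrow> F (h x) (h y)"
  shows "map h w \<in> closed_walks W F L"
  using assms by (auto simp: closed_walks_iff_nth)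

lemma closed_walks_avoiding:
  "w \<in> closed_walks V E L \<Longrightarrow> c \<notin> set w \<Longrightarrow> w \<in> closed_walks (V - {c}) E L"
  by (auto simp: closed_walks_def)

lemma closed_walk_step_into:
  assumes "w \<in> closed_walks V E L" and "1 \<le> L" and "t \<le> L"
  shows "E (w ! (if t = 0 then L - 1 else t - 1)) (w ! t)"
proof -
  have w: "\<forall>t<L. E (w!t) (w!Suc t)" "w!L = w!0"
    using assms(1) by (auto simp: closed_walks_iff_nth)
  show ?thesis
  proof (cases "t = 0")
    case True
    then show ?thesis using w spec[OF w(1), of "L - 1"] assms(2) by (simp add: Suc_diff_1)
  next
    case False
    then show ?thesis using spec[OF w(1), of "t - 1"] assms(3) by simp
  qed
qed

text \<open>Entry t is the image of the step into w!t; for t = 0 this is the closing step from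
  w!(length w - 2) to the last vertex, which equals w!0 on closed walks.\<close>
definition edge_walk :: "('a \<Rightarrow> 'a \<Rightarrow> 'b) \<Rightarrow> 'a list \<Rightarrow> 'b list" where
  "edge_walk g w = map (\<lambda>t. g (w ! (if t = 0 then length w - 2 else t - 1)) (w ! t)) [0..<length w]"

lemma length_edge_walk [simp]: "length (edge_walk g w) = length w"
  by (simp add: edge_walk_def)

lemma nth_edge_walk:
  "t < length w \<Longrightarrow> edge_walk g w ! t = g (w ! (if t = 0 then length w - 2 else t - 1)) (w ! t)"
  by (simp add: edge_walk_def del: upt_Suc)

lemma nth_edge_walk_Suc: "Suc t < length w \<Longrightarrow> edge_walk g w ! Suc t = g (w ! t) (w ! Suc t)"
  by (simp add: nth_edge_walk)

lemma closed_walks_edge_walk: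
  assumes w: "w \<in> closed_walks V E L" and L: "1 \<le> L"
    and mem: "\<And>x y. E x y \<Longrightarrow> g x y \<in> W"
    and adj: "\<And>x y z. E x y \<Longrightarrow> E y z \<Longrightarrow> F (g x y) (g y z)"
  shows "edge_walk g w \<in> closed_walks W F L"
proof -
  have len: "length w = Suc L" and closed: "w!L = w!0"
    using w by (auto simp: closed_walks_iff_nth)
  have entry: "edge_walk g w ! t = g (w ! (if t = 0 then L - 1 else t - 1)) (w ! t)" if "t \<le> L" for t
    using that len by (simp add: nth_edge_walk)
  have "F (edge_walk g w ! t) (edge_walk g w ! Suc t)" if "t < L" for t
    using adj[OF closed_walk_step_into[OF w L, of t]] w that entry[of t] entry[of "Suc t"]
    by (simp add: closed_walks_iff_nth)
  moreover have "edge_walk g w ! t \<in> W" if "t \<le> L" for t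
    using mem[OF closed_walk_step_into[OF w L that]] entry[OF that] by simp
  moreover have "edge_walk g w ! L = edge_walk g w ! 0"
    using entry[of L] entry[of 0] closed L by simp
  ultimately show ?thesis using len by (simp add: closed_walks_iff_nth)
qed

lemma cyclic_induct:
  assumes "t0 \<le> L" and "P t0" and step: "\<And>t. t < L \<Longrightarrow> P t \<Longrightarrow> P (Suc t)"
    and wrap: "P L \<Longrightarrow> P 0" and "t \<le> L"
  shows "P t"
proof -
  have "P s" if "t0 \<le> s" "s \<le> L" for s
    using that by (induction s rule: dec_induct) (use assms in auto)
  then have "P 0" using wrap assms(1) by simp
  then show ?thesis using \<open>t \<le> L\<close> by (induction t) (use step in auto)
qed

section \<open>Starlike trees\<close>

lemma star_verts_eq_Sigma: "star_verts c = insert (0,0) (SIGMA i:{..<length c}. {1..c!i})"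
  unfolding star_verts_def by auto

lemma finite_star_verts: "finite (star_verts c)"
  by (simp add: star_verts_eq_Sigma)

lemma card_star_verts: "card (star_verts c) = Suc (sum_list c)"
proof -
  have "(0,0) \<notin> (SIGMA i:{..<length c}. {1..c!i})" by auto
  then have "card (star_verts c) = Suc (card (SIGMA i:{..<length c}. {1..c!i}))"
    by (simp add: star_verts_eq_Sigma)
  also have "card (SIGMA i:{..<length c}. {1..c!i}) = (\<Sum>i<length c. c!i)"
    by (simp add: card_SigmaI)
  also have "\<dots> = sum_list c" by (simp add: sum_list_sum_nth lessThan_atLeast0)
  finally show ?thesis .
qed

definition broom :: "nat \<Rightarrow> nat \<Rightarrow> nat list" where
  "broom k m = replicate k 1 @ [m]"

locale star_to_broom =
  fixes a :: "nat list" and k m :: nat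
  assumes length_a: "length a = k"
    and branches_pos: "\<forall>x\<in>set a. 1 \<le> x"
    and sum_a: "sum_list a = k + m"
begin

abbreviation "Vs \<equiv> star_verts a"
abbreviation "Es \<equiv> star_adj a"
abbreviation "Vt \<equiv> star_verts (broom k m)"
abbreviation "Et \<equiv> star_adj (broom k m)"

lemma nth_a_pos: "i < k \<Longrightarrow> 1 \<le> a!i"
  using branches_pos length_a nth_mem by auto

lemma mem_Vs: "v \<in> Vs \<longleftrightarrow> v = (0,0) \<or> (fst v < k \<and> 1 \<le> snd v \<and> snd v \<le> a ! fst v)"
  by (cases v) (auto simp: star_verts_def length_a)

lemma mem_Vt: "v \<in> Vt \<longleftrightarrow> v = (0,0) \<or> (fst v < k \<and> snd v = 1) \<or> (fst v = k \<and> 1 \<le> snd v \<and> snd v \<le> m)"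
  by (cases v) (auto simp: star_verts_def broom_def nth_append less_Suc_eq)

lemma center_iff_snd_0: "v \<in> Vs \<Longrightarrow> v = (0,0) \<longleftrightarrow> snd v = 0"
  by (cases v) (auto simp: mem_Vs)

lemma Es_cases: "Es x y \<Longrightarrow> x \<in> Vs \<and> y \<in> Vs \<and>
   ((x = (0,0) \<and> y \<noteq> (0,0) \<and> snd y = 1) \<or> (y = (0,0) \<and> x \<noteq> (0,0) \<and> snd x = 1) \<or>
    (x \<noteq> (0,0) \<and> y \<noteq> (0,0) \<and> fst x = fst y \<and> (snd y = Suc (snd x) \<or> snd x = Suc (snd y))))"
  unfolding star_adj_def star_step_def using center_iff_snd_0[of x] center_iff_snd_0[of y]
  by (cases x; cases y) auto

lemma Et_sym: "Et x y \<Longrightarrow> Et y x"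
  by (auto simp: star_adj_def)

lemma leaf_mem: "i < k \<Longrightarrow> (i,1) \<in> Vt"
  by (simp add: mem_Vt)

lemma Et_center_leaf: "i < k \<Longrightarrow> Et (0,0) (i,1)"
  by (auto simp: star_adj_def star_step_def mem_Vt)

lemma Et_leaf_center: "i < k \<Longrightarrow> Et (i,1) (0,0)"
  using Et_center_leaf Et_sym by blast

definition handle :: "nat \<Rightarrow> nat \<times> nat" where
  "handle j = (if j = 0 then (0,0) else (k,j))"

lemma handle_mem: "j \<le> m \<Longrightarrow> handle j \<in> Vt"
  by (simp add: handle_def mem_Vt)

lemma Et_handle_Suc: "Suc j \<le> m \<Longrightarrow> Et (handle j) (handle (Suc j))"
  by (auto simp: star_adj_def star_step_def handle_def mem_Vt)

lemma Et_handle_Suc': "Suc j \<le> m \<Longrightarrow> Et (handle (Suc j)) (handle j)"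
  using Et_handle_Suc Et_sym by blast

lemma handle_inj: "handle i = handle j \<Longrightarrow> i = j"
  by (auto simp: handle_def split: if_splits)

lemma leaf_notin_range_handle: "i < k \<Longrightarrow> (i,1) \<notin> range handle"
  by (auto simp: handle_def)

definition offset :: "nat \<Rightarrow> nat" where
  "offset i = (\<Sum>j<i. a!j - 1)"

lemma offset_Suc: "offset (Suc i) = offset i + (a!i - 1)"
  by (simp add: offset_def)

lemma offset_mono: "i \<le> j \<Longrightarrow> offset i \<le> offset j"
  unfolding offset_def by (rule sum_mono2) auto

lemma offset_k: "offset k = m"
proof -
  have "offset i + i = (\<Sum>j<i. a!j)" if "i \<le> k" for i
    using that
  proof (induction i)
    case (Suc i)
    then show ?case using nth_a_pos[of i] by (simp add: offset_def)
  qed (simp add: offset_def)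
  from this[of k] show ?thesis
    using sum_a length_a by (simp add: sum_list_sum_nth lessThan_atLeast0)
qed

lemma offset_Suc_le: "i < k \<Longrightarrow> offset i + (a!i - 1) \<le> m"
  using offset_mono[of "Suc i" k] offset_k offset_Suc by simp

lemma nth_a_le: "i < k \<Longrightarrow> a!i \<le> Suc m"
  using offset_Suc_le by fastforce

lemma short_branch_exists:
  assumes "2 \<le> k" and "1 \<le> m"
  shows "\<exists>i<k. a!i \<le> m"
proof -
  have "(a!0 - 1) + (a!1 - 1) \<le> m"
    using offset_mono[of 2 k] offset_k assms(1) by (simp add: offset_def numeral_2_eq_2)
  then have "a!0 \<le> m \<or> a!1 \<le> m" using assms nth_a_pos[of 0] nth_a_pos[of 1] by linarith
  moreover have "0 < k" "1 < k" using assms(1) by auto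
  ultimately show ?thesis by blast
qed

section \<open>Closed walks of a starlike tree inside the broom\<close>

abbreviation "CS L \<equiv> closed_walks Vs Es L"
abbreviation "CT L \<equiv> closed_walks Vt Et L"

definition fold_edge :: "nat \<times> nat \<Rightarrow> nat \<times> nat \<Rightarrow> nat \<times> nat" where
  "fold_edge x y = (if y = (0,0) then (0,0) else if x = (0,0) then (fst y, 1) else handle (snd x - 1))"

definition source_depth :: "nat \<times> nat \<Rightarrow> nat" where
  "source_depth v = (if v = (0,0) then 1 else if fst v = k then snd v + 1 else 0)"

lemma source_depth_fold_edge: "Es x y \<Longrightarrow> source_depth (fold_edge x y) = snd x"
  using Es_cases[of x y] by (auto simp: fold_edge_def source_depth_def handle_def mem_Vs)

lemma source_depth_handle: "source_depth (handle j) = Suc j"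
  by (simp add: source_depth_def handle_def)

lemma fold_edge_mem: "Es x y \<Longrightarrow> fold_edge x y \<in> Vt"
  using Es_cases[of x y] nth_a_le[of "fst x"] handle_mem[of "snd x - 1"] leaf_mem[of "fst y"]
  by (auto simp: fold_edge_def mem_Vs mem_Vt[of "(0,0)"])

lemma fold_edge_adj:
  assumes xy: "Es x y" and yz: "Es y z"
  shows "Et (fold_edge x y) (fold_edge y z)"
proof -
  note E1 = Es_cases[OF xy] and E2 = Es_cases[OF yz]
  have in_branch: "fst v < k \<and> 1 \<le> snd v \<and> snd v \<le> Suc m" if "v \<in> Vs" "v \<noteq> (0,0)" for v
    using that nth_a_le[of "fst v"] by (auto simp: mem_Vs)
  consider "y = (0,0)" | "y \<noteq> (0,0)" "z = (0,0)" | "x = (0,0)" "y \<noteq> (0,0)" "z \<noteq> (0,0)"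
    | "x \<noteq> (0,0)" "y \<noteq> (0,0)" "z \<noteq> (0,0)"
    by blast
  then show ?thesis
  proof cases
    case 1
    then show ?thesis using E2 in_branch[of z] Et_center_leaf[of "fst z"] by (simp add: fold_edge_def)
  next
    case 2
    then have "snd y = 1" "x = (0,0) \<or> snd x = 2"
      using E1 E2 center_iff_snd_0[of x] by auto
    then show ?thesis
      using 2 E1 in_branch[of x] in_branch[of y] Et_leaf_center[of "fst y"] Et_handle_Suc'[of 0]
      by (auto simp: fold_edge_def handle_def)
  next
    case 3
    then show ?thesis using E1 E2 in_branch[of y] Et_leaf_center[of "fst y"]
      by (simp add: fold_edge_def handle_def)
  next
    case 4
    then have "snd y = Suc (snd x) \<or> snd x = Suc (snd y)" using E1 by simp
    then show ?thesis
      using 4 E1 E2 in_branch[of x] in_branch[of y] Et_handle_Suc[of "snd x - 1"]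
        Et_handle_Suc'[of "snd y - 1"]
      by (auto simp: fold_edge_def)
  qed
qed

lemma closed_walks_fold_edge: "w \<in> CS L \<Longrightarrow> 1 \<le> L \<Longrightarrow> edge_walk fold_edge w \<in> CT L"
  by (rule closed_walks_edge_walk[where E = Es]) (auto intro: fold_edge_mem fold_edge_adj)

lemma snd_from_edge_walk:
  "w \<in> CS L \<Longrightarrow> t < L \<Longrightarrow> snd (w!t) = source_depth (edge_walk fold_edge w ! Suc t)"
  by (simp add: closed_walks_iff_nth nth_edge_walk_Suc source_depth_fold_edge)

lemma fst_eq_if_fold_edge_eq:
  assumes "Es x y" and "Es x' y'" and "fold_edge x y = fold_edge x' y'"
    and "x = (0,0) \<longleftrightarrow> x' = (0,0)" and "y = (0,0) \<longleftrightarrow> y' = (0,0)" and "fst x = fst x'"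
  shows "fst y = fst y'"
  using assms Es_cases[OF assms(1)] Es_cases[OF assms(2)] by (auto simp: fold_edge_def)

lemma inj_on_edge_walk_fold_edge:
  assumes L: "1 \<le> L"
  shows "inj_on (edge_walk fold_edge) {w \<in> CS L. (0,0) \<in> set w}"
proof (rule inj_onI)
  fix w w' assume "w \<in> {w \<in> CS L. (0,0) \<in> set w}" and "w' \<in> {w \<in> CS L. (0,0) \<in> set w}"
    and eq: "edge_walk fold_edge w = edge_walk fold_edge w'"
  then have w: "w \<in> CS L" and "(0,0) \<in> set w" and w': "w' \<in> CS L" by auto
  then have len: "length w = Suc L" "length w' = Suc L" and closed: "w!L = w!0" "w'!L = w'!0"
    and mem: "\<forall>t\<le>L. w!t \<in> Vs" "\<forall>t\<le>L. w'!t \<in> Vs"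
    and step: "\<forall>t<L. Es (w!t) (w!Suc t)" "\<forall>t<L. Es (w'!t) (w'!Suc t)"
    by (auto simp: closed_walks_iff_nth)
  have snd_eq: "snd (w!t) = snd (w'!t)" if "t \<le> L" for t
  proof -
    have "snd (w!t) = snd (w'!t)" if "t < L" for t
      using snd_from_edge_walk[OF w that] snd_from_edge_walk[OF w' that] eq by simp
    then show ?thesis using \<open>t \<le> L\<close> closed L by (cases "t = L") auto
  qed
  have center_eq: "w!t = (0,0) \<longleftrightarrow> w'!t = (0,0)" if "t \<le> L" for t
    using center_iff_snd_0 mem snd_eq that by auto
  obtain t0 where t0: "t0 \<le> L" "w!t0 = (0,0)"
    using \<open>(0,0) \<in> set w\<close> len by (auto simp: in_set_conv_nth less_Suc_eq_le)
  have fst_eq: "fst (w!t) = fst (w'!t)" if "t \<le> L" for t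
  proof (rule cyclic_induct[OF t0(1), where P = "\<lambda>t. fst (w!t) = fst (w'!t)"])
    show "fst (w!t0) = fst (w'!t0)" using t0 center_eq[of t0] by simp
  next
    fix u assume u: "u < L" and "fst (w!u) = fst (w'!u)"
    moreover have "fold_edge (w!u) (w!Suc u) = fold_edge (w'!u) (w'!Suc u)"
      using eq u len by (metis Suc_mono nth_edge_walk_Suc)
    ultimately show "fst (w!Suc u) = fst (w'!Suc u)"
      using step u center_eq[of u] center_eq[of "Suc u"]
      by (intro fst_eq_if_fold_edge_eq[of "w!u" "w!Suc u" "w'!u" "w'!Suc u"]) simp_all
  next
    show "fst (w!L) = fst (w'!L) \<Longrightarrow> fst (w!0) = fst (w'!0)" using closed by simp
  qed (rule that)
  show "w = w'"
  proof (rule nth_equalityI)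
    fix t assume "t < length w"
    then have "t \<le> L" using len by simp
    then show "w!t = w'!t" using fst_eq snd_eq by (simp add: prod_eq_iff)
  qed (use len in simp)
qed

text \<open>Branch i is laid along the handle from position offset i to offset i + a!i - 1, so
  consecutive branches share exactly one handle vertex.\<close>
definition embed :: "nat \<times> nat \<Rightarrow> nat \<times> nat" where
  "embed v = handle (offset (fst v) + snd v - 1)"

lemma embed_mem: "v \<in> Vs - {(0,0)} \<Longrightarrow> embed v \<in> Vt"
  using offset_Suc_le[of "fst v"] by (auto simp: embed_def mem_Vs intro!: handle_mem)

lemma embed_adj:
  assumes "x \<in> Vs - {(0,0)}" and "y \<in> Vs - {(0,0)}" and "Es x y"
  shows "Et (embed x) (embed y)"
proof -
  have "fst x = fst y" and depth: "snd y = Suc (snd x) \<or> snd x = Suc (snd y)"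
    and bound: "offset (fst x) + (a ! fst x - 1) \<le> m" "1 \<le> snd x" "1 \<le> snd y"
      "snd x \<le> a ! fst x" "snd y \<le> a ! fst x"
    using assms Es_cases[OF assms(3)] offset_Suc_le[of "fst x"] by (auto simp: mem_Vs)
  from depth show ?thesis
  proof
    assume "snd y = Suc (snd x)"
    then show ?thesis using Et_handle_Suc[of "offset (fst x) + snd x - 1"] \<open>fst x = fst y\<close> bound
      by (simp add: embed_def)
  next
    assume "snd x = Suc (snd y)"
    then show ?thesis using Et_handle_Suc'[of "offset (fst x) + snd y - 1"] \<open>fst x = fst y\<close> bound
      by (simp add: embed_def)
  qed
qed

lemma closed_walks_map_embed:
  "w \<in> closed_walks (Vs - {(0,0)}) Es L \<Longrightarrow> map embed w \<in> CT L"
  by (rule closed_walks_map[where V = "Vs - {(0,0)}" and E = Es]) (auto intro: embed_mem embed_adj)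

lemma fst_const_avoiding_center:
  assumes w: "w \<in> closed_walks (Vs - {(0,0)}) Es L"
  shows "t \<le> L \<Longrightarrow> fst (w!t) = fst (w!0)"
proof (induction t)
  case (Suc t)
  then have "Es (w!t) (w!Suc t)" "w!t \<noteq> (0,0)" "w!Suc t \<noteq> (0,0)"
    using w by (auto simp: closed_walks_iff_nth)
  then show ?case using Es_cases[OF \<open>Es (w!t) (w!Suc t)\<close>] Suc by auto
qed simp

lemma embed_eq_imp_tip:
  assumes "x \<in> Vs - {(0,0)}" and "y \<in> Vs - {(0,0)}" and "fst x < fst y" and "embed x = embed y"
  shows "snd x = a ! fst x"
proof -
  have "offset (fst x) + snd x - 1 = offset (fst y) + snd y - 1"
    using assms(4) by (auto simp: embed_def dest: handle_inj)
  moreover have "offset (fst x) + (a ! fst x - 1) \<le> offset (fst y)"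
    using offset_mono[of "Suc (fst x)" "fst y"] offset_Suc assms(3) by simp
  ultimately show ?thesis using assms(1,2) by (auto simp: mem_Vs)
qed

lemma embed_eq_same_branch:
  assumes "x \<in> Vs - {(0,0)}" and "y \<in> Vs - {(0,0)}" and "fst x = fst y" and "embed x = embed y"
  shows "x = y"
proof -
  have "offset (fst x) + snd x - 1 = offset (fst x) + snd y - 1"
    using assms(3,4) by (auto simp: embed_def dest: handle_inj)
  then show ?thesis using assms by (auto simp: mem_Vs prod_eq_iff)
qed

lemma inj_on_map_embed:
  assumes L: "1 \<le> L"
  shows "inj_on (map embed) (closed_walks (Vs - {(0,0)}) Es L)"
proof -
  have mem: "v!t \<in> Vs - {(0,0)}" if "v \<in> closed_walks (Vs - {(0,0)}) Es L" "t \<le> L" for v t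
    using that by (simp add: closed_walks_iff_nth)
  have no_two_tips: "\<not> (snd (v!0) = a ! fst (v!0) \<and> snd (v!1) = a ! fst (v!1))"
    if v: "v \<in> closed_walks (Vs - {(0,0)}) Es L" for v
  proof -
    have "Es (v!0) (v!1)" "v!0 \<noteq> (0,0)" "v!1 \<noteq> (0,0)"
      using v L by (auto simp: closed_walks_iff_nth)
    then show ?thesis using Es_cases[OF \<open>Es (v!0) (v!1)\<close>] by auto
  qed
  have branch_le: "fst (v!0) \<le> fst (v'!0)"
    if v: "v \<in> closed_walks (Vs - {(0,0)}) Es L" and v': "v' \<in> closed_walks (Vs - {(0,0)}) Es L"
      and eq: "map embed v = map embed v'" for v v'
  proof (rule ccontr)
    assume "\<not> fst (v!0) \<le> fst (v'!0)"
    then have "snd (v'!t) = a ! fst (v'!t)" if "t \<le> L" for t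
    proof (intro embed_eq_imp_tip)
      show "v'!t \<in> Vs - {(0,0)}" "v!t \<in> Vs - {(0,0)}" using mem v v' that by auto
      show "embed (v'!t) = embed (v!t)"
        using eq that v v' by (metis closed_walks_iff_nth le_imp_less_Suc nth_map)
    qed (use fst_const_avoiding_center[OF v that] fst_const_avoiding_center[OF v' that] in simp)
    then show False using no_two_tips[OF v'] L by simp
  qed
  show ?thesis
  proof (rule inj_onI)
    fix w w' assume w: "w \<in> closed_walks (Vs - {(0,0)}) Es L"
      and w': "w' \<in> closed_walks (Vs - {(0,0)}) Es L" and eq: "map embed w = map embed w'"
    have "w!t = w'!t" if "t \<le> L" for t
    proof (rule embed_eq_same_branch)
      show "w!t \<in> Vs - {(0,0)}" "w'!t \<in> Vs - {(0,0)}" using mem w w' that by auto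
      show "fst (w!t) = fst (w'!t)"
        using branch_le[OF w w' eq] branch_le[OF w' w eq[symmetric]]
          fst_const_avoiding_center[OF w that] fst_const_avoiding_center[OF w' that] by simp
      show "embed (w!t) = embed (w'!t)"
        using eq that w w' by (metis closed_walks_iff_nth le_imp_less_Suc nth_map)
    qed
    then show "w = w'" using w w' by (intro nth_equalityI) (auto simp: closed_walks_iff_nth)
  qed
qed

definition to_broom :: "(nat \<times> nat) list \<Rightarrow> (nat \<times> nat) list" where
  "to_broom w = (if (0,0) \<in> set w then edge_walk fold_edge w else map embed w)"

lemma leaf_in_edge_walk:
  assumes w: "w \<in> CS L" and L: "1 \<le> L" and "(0,0) \<in> set w"
  shows "\<exists>i<k. (i,1) \<in> set (edge_walk fold_edge w)"
proof -
  have len: "length w = Suc L" and closed: "w!L = w!0" and step: "\<forall>t<L. Es (w!t) (w!Suc t)"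
    using w by (auto simp: closed_walks_iff_nth)
  obtain t0 where t0: "t0 < L" "w!t0 = (0,0)"
  proof -
    obtain t where "t \<le> L" "w!t = (0,0)"
      using \<open>(0,0) \<in> set w\<close> len by (auto simp: in_set_conv_nth less_Suc_eq_le)
    then show thesis using that[of t] that[of 0] closed L by (cases "t = L") auto
  qed
  then have "Es (0,0) (w!Suc t0)" using step by metis
  then have "fst (w!Suc t0) < k" "edge_walk fold_edge w ! Suc t0 = (fst (w!Suc t0), 1)"
    using Es_cases[of "(0,0)" "w!Suc t0"] t0 len by (auto simp: nth_edge_walk_Suc fold_edge_def mem_Vs)
  then show ?thesis using t0 len by (metis Suc_mono length_edge_walk nth_mem)
qed

lemma leaf_notin_map_embed: "i < k \<Longrightarrow> (i,1) \<notin> set (map embed w)"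
  using leaf_notin_range_handle by (auto simp: embed_def)

lemma to_broom_mem: "w \<in> CS L \<Longrightarrow> 1 \<le> L \<Longrightarrow> to_broom w \<in> CT L"
  by (simp add: to_broom_def closed_walks_fold_edge closed_walks_map_embed closed_walks_avoiding)

lemma inj_on_to_broom:
  assumes L: "1 \<le> L"
  shows "inj_on to_broom (CS L)"
proof (rule inj_onI)
  fix w w' assume w: "w \<in> CS L" and w': "w' \<in> CS L" and eq: "to_broom w = to_broom w'"
  have mixed: False if "v \<in> CS L" "(0,0) \<in> set v" "(0,0) \<notin> set v'"
    and "edge_walk fold_edge v = map embed v'" for v v'
    using leaf_in_edge_walk[OF that(1) L that(2)] leaf_notin_map_embed that(4) by auto
  consider "(0,0) \<in> set w" "(0,0) \<in> set w'" | "(0,0) \<notin> set w" "(0,0) \<notin> set w'"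
    | "(0,0) \<in> set w" "(0,0) \<notin> set w'" | "(0,0) \<notin> set w" "(0,0) \<in> set w'"
    by blast
  then show "w = w'"
  proof cases
    case 1
    then show ?thesis using eq w w' inj_on_edge_walk_fold_edge[OF L]
      by (auto simp: to_broom_def inj_on_def)
  next
    case 2
    then show ?thesis
      using eq inj_on_map_embed[OF L] closed_walks_avoiding[OF w] closed_walks_avoiding[OF w']
      by (auto simp: to_broom_def inj_on_def)
  qed (use mixed[of w w'] mixed[of w' w] w w' eq in \<open>auto simp: to_broom_def\<close>)
qed

text \<open>Decoding this walk would force a walk in S(a) that starts at the centre and goes
  m + 1 steps deep into branch i.\<close>
definition excursion :: "nat \<Rightarrow> (nat \<times> nat) list" where
  "excursion i = (0,0) # (i,1) # map (\<lambda>u. handle (min u (2*m - u))) [0..<Suc (2*m)]"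

lemma nth_excursion_Suc_Suc: "u \<le> 2*m \<Longrightarrow> excursion i ! Suc (Suc u) = handle (min u (2*m - u))"
  by (simp add: excursion_def del: upt_Suc)

lemma excursion_mem:
  assumes "i < k"
  shows "excursion i \<in> CT (2*m+2)"
proof -
  have "Et (excursion i ! t) (excursion i ! Suc t)" if "t < 2*m+2" for t
  proof -
    consider "t = 0" | "t = 1" | u where "t = Suc (Suc u)" "u < 2*m"
      using \<open>t < 2*m+2\<close> by (metis One_nat_def Suc_less_SucD add_2_eq_Suc' not0_implies_Suc)
    then show ?thesis
    proof cases
      case 3
      show ?thesis
      proof (cases "u < m")
        case True
        then show ?thesis
          using 3 nth_excursion_Suc_Suc[of u i] nth_excursion_Suc_Suc[of "Suc u" i] Et_handle_Suc[of u]
          by simp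
      next
        case False
        then have "min u (2*m - u) = Suc (2*m - Suc u)" "min (Suc u) (2*m - Suc u) = 2*m - Suc u"
          using 3 by auto
        then show ?thesis
          using 3 False nth_excursion_Suc_Suc[of u i] nth_excursion_Suc_Suc[of "Suc u" i]
            Et_handle_Suc'[of "2*m - Suc u"]
          by simp
      qed
    qed (use assms Et_center_leaf Et_leaf_center nth_excursion_Suc_Suc[of 0 i]
          in \<open>auto simp: excursion_def handle_def\<close>)
  qed
  moreover have "excursion i ! t \<in> Vt" if "t \<le> 2*m+2" for t
    using that assms leaf_mem[of i] handle_mem[of "min (t - 2) (2*m - (t - 2))"]
      nth_excursion_Suc_Suc[of "t - 2" i] mem_Vt[of "(0,0)"]
    by (auto simp: excursion_def nth_Cons split: nat.splits)
  moreover have "excursion i ! (2*m+2) = excursion i ! 0"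
    using nth_excursion_Suc_Suc[of "2*m" i] by (simp add: handle_def excursion_def)
  ultimately show ?thesis by (simp add: closed_walks_iff_nth excursion_def)
qed

lemma excursion_not_image:
  assumes i: "i < k" and short: "a!i \<le> m"
  shows "excursion i \<notin> to_broom ` CS (2*m+2)"
proof
  assume "excursion i \<in> to_broom ` CS (2*m+2)"
  then obtain w where w: "w \<in> CS (2*m+2)" and eq: "to_broom w = excursion i" by auto
  have len: "length w = 2*m+3" and mem: "\<forall>t\<le>2*m+2. w!t \<in> Vs"
    and edges: "\<forall>t<2*m+2. Es (w!t) (w!Suc t)"
    using w by (auto simp: closed_walks_iff_nth)
  have "(i,1) \<in> set (to_broom w)" by (simp add: eq excursion_def)
  then have "(0,0) \<in> set w" using leaf_notin_map_embed[OF i] by (auto simp: to_broom_def split: if_splits)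
  then have ew: "edge_walk fold_edge w = excursion i" using eq by (simp add: to_broom_def)
  have "snd (w!0) = source_depth (i,1)"
    using snd_from_edge_walk[OF w, of 0] ew by (simp add: excursion_def)
  then have w0: "w!0 = (0,0)" using center_iff_snd_0 mem i by (simp add: source_depth_def)
  have depth: "snd (w!t) = t" if "1 \<le> t" "t \<le> Suc m" for t
  proof -
    have "snd (w!t) = source_depth (excursion i ! Suc (Suc (t - 1)))"
      using snd_from_edge_walk[OF w, of t] that ew by simp
    then show ?thesis using that nth_excursion_Suc_Suc[of "t - 1" i] by (simp add: source_depth_handle)
  qed
  have branch: "fst (w!t) = i" if "1 \<le> t" "t \<le> Suc m" for t
    using that
  proof (induction t rule: dec_induct)
    case base
    have "fold_edge (w!0) (w!1) = (i,1)"
      using ew len nth_edge_walk_Suc[of 0 w fold_edge] by (simp add: excursion_def)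
    then show ?case using w0 edges Es_cases[of "w!0" "w!1"] by (auto simp: fold_edge_def)
  next
    case (step t)
    then have "Es (w!t) (w!Suc t)" "w!t \<noteq> (0,0)" "w!Suc t \<noteq> (0,0)"
      using edges depth[of t] depth[of "Suc t"] by auto
    then show ?case using Es_cases[OF \<open>Es (w!t) (w!Suc t)\<close>] step by auto
  qed
  have "w!Suc m \<in> Vs" "w!Suc m \<noteq> (0,0)" using mem depth[of "Suc m"] by auto
  then have "Suc m \<le> a!i" using depth[of "Suc m"] branch[of "Suc m"] by (simp add: mem_Vs)
  then show False using short by simp
qed

theorem walk_prec_star_broom:
  assumes "i < k" and "a!i \<le> m"
  shows "walk_prec Vs Es Vt Et"
  unfolding walk_prec_def
proof
  show "\<forall>L. M Vs Es L \<le> M Vt Et L"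
  proof
    fix L
    show "M Vs Es L \<le> M Vt Et L"
    proof (cases "L = 0")
      case True
      then show ?thesis by (simp add: M_0 card_star_verts broom_def sum_a sum_list_replicate)
    next
      case False
      then show ?thesis
        by (intro M_le_if_inj_on[where f = to_broom] finite_star_verts inj_on_to_broom)
          (auto intro: to_broom_mem)
    qed
  qed
  have "to_broom ` CS (2*m+2) \<subset> CT (2*m+2)"
    using to_broom_mem excursion_mem[OF assms(1)] excursion_not_image[OF assms] by auto
  then show "\<exists>L. M Vs Es L < M Vt Et L"
    by (intro exI M_less_if_inj_on[where f = to_broom] finite_star_verts inj_on_to_broom) auto
qed

end

theorem proposition2:
  fixes a :: "nat list" and n k :: nat
  assumes "length a = k" and "k \<ge> 3"
    and "sorted a" and "\<forall>x\<in>set a. 1 \<le> x"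
    and "sum_list a = n"
    and "n > k"
  shows "walk_prec (star_verts a) (star_adj a)
           (star_verts (replicate k 1 @ [n - k])) (star_adj (replicate k 1 @ [n - k]))"
proof -
  interpret star_to_broom a k "n - k"
    using assms by unfold_locales auto
  obtain i where "i < k" "a!i \<le> n - k"
    using short_branch_exists assms(2,6) by fastforce
  then show ?thesis by (rule walk_prec_star_broom[unfolded broom_def])
qed

end
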